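(* Let $M$ be a magma. If $M$ is graded then $M$ is semigraded, and if $M$ is semigraded then $M$ is initial.
   Context: A magma is a set $M$ with a binary operation $+$. $\mathbb{N}$ denotes the set of positive integers. A gradation of $M$ is a map $\ell: M\to\mathbb{N}$ with $\ell(x+y)=\ell(x)+\ell(y)$ for all $x,y$; $M$ is graded if it admits a gradation. $M$ is semigraded if there is a map $\mu: M\to\mathbb{N}$ with $\mu(x+y)>\mu(x)$ and $\mu(x+y)>\mu(y)$ for all $x,y\in M$. The initial part of $M$ is $\mathfrak{I}(M)=\langle M\setminus(M+M)\rangle$, the submagma generated by the indecomposable elements (those not of the form $x+y$), and $M$ is initial if $\mathfrak{I}(M)=M$. *)

theory Defs
  imports Main
begin

definition magma :: "'a set \<Rightarrow> ('a \<Rightarrow> 'a \<Rightarrow> 'a) \<Rightarrow> bool" where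
  "magma M add \<longleftrightarrow> (\<forall>x\<in>M. \<forall>y\<in>M. add x y \<in> M)"

definition graded :: "'a set \<Rightarrow> ('a \<Rightarrow> 'a \<Rightarrow> 'a) \<Rightarrow> bool" where
  "graded M add \<longleftrightarrow> (\<exists>l :: 'a \<Rightarrow> nat. (\<forall>x\<in>M. l x \<ge> 1) \<and>
      (\<forall>x\<in>M. \<forall>y\<in>M. l (add x y) = l x + l y))"

definition semigraded :: "'a set \<Rightarrow> ('a \<Rightarrow> 'a \<Rightarrow> 'a) \<Rightarrow> bool" where
  "semigraded M add \<longleftrightarrow> (\<exists>mu :: 'a \<Rightarrow> nat. (\<forall>x\<in>M. mu x \<ge> 1) \<and>
      (\<forall>x\<in>M. \<forall>y\<in>M. mu (add x y) > mu x \<and> mu (add x y) > mu y))"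

definition indecomposables :: "'a set \<Rightarrow> ('a \<Rightarrow> 'a \<Rightarrow> 'a) \<Rightarrow> 'a set" where
  "indecomposables M add = M - {add x y | x y. x \<in> M \<and> y \<in> M}"

inductive_set generated :: "('a \<Rightarrow> 'a \<Rightarrow> 'a) \<Rightarrow> 'a set \<Rightarrow> 'a set"
  for add :: "'a \<Rightarrow> 'a \<Rightarrow> 'a" and S :: "'a set" where
  base: "s \<in> S \<Longrightarrow> s \<in> generated add S"
| step: "a \<in> generated add S \<Longrightarrow> b \<in> generated add S \<Longrightarrow> add a b \<in> generated add S"

definition initial_part :: "'a set \<Rightarrow> ('a \<Rightarrow> 'a \<Rightarrow> 'a) \<Rightarrow> 'a set" where
  "initial_part M add = generated add (indecomposables M add)"

definition initial :: "'a set \<Rightarrow> ('a \<Rightarrow> 'a \<Rightarrow> 'a) \<Rightarrow> bool" where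
  "initial M add \<longleftrightarrow> initial_part M add = M"

end

theory Submission
  imports Defs
begin

(* A gradation is a semigradation, as every grade is positive.  In a semigraded magma,
   strong induction on the semigradation shows that every element lies in the initial part:
   it is either indecomposable or a sum of two elements of strictly smaller degree. *)

lemma generated_subset:
  assumes "magma M add" and "S \<subseteq> M"
  shows "generated add S \<subseteq> M"
proof
  fix x assume "x \<in> generated add S"
  then show "x \<in> M"
    by induction (use assms in \<open>auto simp: magma_def\<close>)
qed

lemma indecomposables_subset: "indecomposables M add \<subseteq> M"
  by (auto simp: indecomposables_def)

lemma subset_initial_part_if_strictly_increasing:
  fixes mu :: "'a \<Rightarrow> nat"
  assumes increasing: "\<And>x y. x \<in> M \<Longrightarrow> y \<in> M \<Longrightarrow> mu x < mu (add x y) \<and> mu y < mu (add x y)"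
  shows "M \<subseteq> initial_part M add"
proof
  fix z assume "z \<in> M"
  then show "z \<in> initial_part M add"
  proof (induction z rule: measure_induct_rule[of mu])
    case (less z)
    show ?case
    proof (cases "z \<in> indecomposables M add")
      case True
      then show ?thesis
        unfolding initial_part_def by (rule generated.base)
    next
      case False
      then obtain x y where "x \<in> M" "y \<in> M" "z = add x y"
        using \<open>z \<in> M\<close> unfolding indecomposables_def by blast
      with less.IH increasing show ?thesis
        unfolding initial_part_def by (metis generated.step)
    qed
  qed
qed

lemma graded_imp_semigraded:
  assumes "graded M add"
  shows "semigraded M add"
proof -
  obtain l :: "'a \<Rightarrow> nat" where pos: "\<forall>x\<in>M. l x \<ge> 1"
    and additive: "\<forall>x\<in>M. \<forall>y\<in>M. l (add x y) = l x + l y"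
    using assms unfolding graded_def by blast
  show ?thesis
    unfolding semigraded_def by (rule exI[of _ l]) (use pos additive in fastforce)
qed

lemma semigraded_imp_initial:
  assumes "magma M add" and "semigraded M add"
  shows "initial M add"
proof -
  obtain mu :: "'a \<Rightarrow> nat"
    where "\<forall>x\<in>M. \<forall>y\<in>M. mu x < mu (add x y) \<and> mu y < mu (add x y)"
    using assms(2) unfolding semigraded_def by blast
  then have "M \<subseteq> initial_part M add"
    by (intro subset_initial_part_if_strictly_increasing[of M mu]) blast
  moreover have "initial_part M add \<subseteq> M"
    unfolding initial_part_def
    using generated_subset[OF assms(1) indecomposables_subset] .
  ultimately show ?thesis
    unfolding initial_def by blast
qed

theorem proposition4p7:
  fixes M :: "'a set" and add :: "'a \<Rightarrow> 'a \<Rightarrow> 'a"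
  assumes "magma M add"
  shows "(graded M add \<longrightarrow> semigraded M add) \<and> (semigraded M add \<longrightarrow> initial M add)"
  using graded_imp_semigraded semigraded_imp_initial[OF assms] by blast

end
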